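(* Let $T\subseteq\mathbb{N}^{<\mathbb{N}}$ be a tree, order $\mathcal{JT}(T)$ by the Kleene–Brouwer ordering $\leq_{\mathrm{KB}}$, and define $h\colon T\to\boldsymbol\omega^{\mathcal{JT}(T)}$ by $h(\emptyset)=\omega^{\emptyset}\cdot3$ and, for $\sigma\neq\emptyset$, \[h(\sigma)=\Big(\sum_{i<|J(\sigma)|,\ \{i\}^\sigma(i)\uparrow}\omega^{J(\sigma)\restriction i}\Big)+\omega^{J(\sigma)}\cdot2\] (sum written in $\leq_{\mathrm{KB}}$-decreasing order of $i$ increasing). Then for all $\rho,\sigma\in T$ with $\sigma\subsetneq\rho$ we have $h(\rho)<h(\sigma)$ in $\boldsymbol\omega^{\mathcal{JT}(T)}$.
   Context: Strings are coded by natural numbers via a fixed computable coding with $\sigma\subsetneq\tau$ implying code$(\sigma)<$ code$(\tau)$. $\{i\}^\sigma(i)\uparrow$ means the $i$-th machine on input $i$ with oracle $\sigma$ does not halt in fewer than $|\sigma|$ steps. For finite $\sigma$: $t_{-1}=1$, $t_n=\max\{t_{n-1}+1,\mu t(\{n\}^{\sigma\restriction t}(n)\downarrow)\}$ ($t_n=t_{n-1}+1$ if no such $t$), and $J(\sigma)=\langle\sigma\restriction t_0,\dots,\sigma\restriction t_{k-1}\rangle$ with $k$ least such that $t_k>|\sigma|$; $\mathcal{JT}(T)=\{J(\sigma):\sigma\in T\}$. Kleene–Brouwer ordering: $\sigma\leq_{\mathrm{KB}}\tau$ iff $\sigma\supseteq\tau$ or there is $i$ with $\sigma\restriction i=\tau\restriction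 i$ and $\sigma(i)<\tau(i)$. For a linear ordering $\mathcal{L}$, $\boldsymbol\omega^{\mathcal{L}}$ is the set of finite nonincreasing strings $\langle x_0,\dots,x_{k-1}\rangle$ of elements of $\mathcal{L}$, written $\omega^{x_0}+\dots+\omega^{x_{k-1}}$ (with $\omega^x\cdot m$ meaning $m$ repetitions of $x$), ordered by: $\langle x_0,\dots,x_{k-1}\rangle\leq\langle y_0,\dots,y_{l-1}\rangle$ iff $k\leq l$ and $x_i=y_i$ for $i<k$, or at the least $i$ with $x_i\neq y_i$, $x_i<y_i$. *)

theory Defs
  imports Main "HOL-Library.Sublist"
begin

definition is_tree :: "nat list set \<Rightarrow> bool" where
  "is_tree T \<longleftrightarrow> (\<forall>\<sigma>\<in>T. \<forall>\<tau>. prefix \<tau> \<sigma> \<longrightarrow> \<tau> \<in> T)"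

text \<open>conv i s  models  {i}^s(i) converges (halts in fewer than |s| steps).
  tprev conv s n is t_(n-1); so t_n = tprev conv s (Suc n), with t_(-1) = 1.\<close>
fun tprev :: "(nat \<Rightarrow> nat list \<Rightarrow> bool) \<Rightarrow> nat list \<Rightarrow> nat \<Rightarrow> nat" where
  "tprev conv s 0 = 1"
| "tprev conv s (Suc n) =
     max (tprev conv s n + 1)
         (if (\<exists>t. conv n (take t s)) then (LEAST t. conv n (take t s)) else tprev conv s n + 1)"

definition tseq :: "(nat \<Rightarrow> nat list \<Rightarrow> bool) \<Rightarrow> nat list \<Rightarrow> nat \<Rightarrow> nat" where
  "tseq conv s n = tprev conv s (Suc n)"

definition Jlen :: "(nat \<Rightarrow> nat list \<Rightarrow> bool) \<Rightarrow> nat list \<Rightarrow> nat" where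
  "Jlen conv s = (LEAST k. tseq conv s k > length s)"

definition J :: "(nat list \<Rightarrow> nat) \<Rightarrow> (nat \<Rightarrow> nat list \<Rightarrow> bool) \<Rightarrow> nat list \<Rightarrow> nat list" where
  "J code conv s = map (\<lambda>i. code (take (tseq conv s i) s)) [0..<Jlen conv s]"

definition JT :: "(nat list \<Rightarrow> nat) \<Rightarrow> (nat \<Rightarrow> nat list \<Rightarrow> bool) \<Rightarrow> nat list set \<Rightarrow> nat list set" where
  "JT code conv T = J code conv ` T"

definition kb_le :: "nat list \<Rightarrow> nat list \<Rightarrow> bool" where
  "kb_le a b \<longleftrightarrow> prefix b a \<or>
     (\<exists>i. i < length a \<and> i < length b \<and> take i a = take i b \<and> a ! i < b ! i)"

text \<open>Ordering of omega^L (finite nonincreasing strings over L), given the order le of L.\<close>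
definition omega_le :: "('a \<Rightarrow> 'a \<Rightarrow> bool) \<Rightarrow> 'a list \<Rightarrow> 'a list \<Rightarrow> bool" where
  "omega_le le xs ys \<longleftrightarrow> prefix xs ys \<or>
     (\<exists>i. i < length xs \<and> i < length ys \<and> take i xs = take i ys \<and>
          xs ! i \<noteq> ys ! i \<and> le (xs ! i) (ys ! i))"

definition omega_less :: "('a \<Rightarrow> 'a \<Rightarrow> bool) \<Rightarrow> 'a list \<Rightarrow> 'a list \<Rightarrow> bool" where
  "omega_less le xs ys \<longleftrightarrow> omega_le le xs ys \<and> xs \<noteq> ys"

text \<open>The map h, as an element of omega^(JT(T)) written as list of exponents.\<close>
definition h :: "(nat list \<Rightarrow> nat) \<Rightarrow> (nat \<Rightarrow> nat list \<Rightarrow> bool) \<Rightarrow> nat list \<Rightarrow> nat list list" where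
  "h code conv s =
     (if s = [] then [[], [], []]
      else map (\<lambda>i. take i (J code conv s))
                 (filter (\<lambda>i. \<not> conv i s) [0..<length (J code conv s)])
           @ [J code conv s, J code conv s])"

end

theory Submission
  imports Defs
begin

text \<open>Let \<open>D\<close> be the first index below \<open>|J(\<sigma>)|\<close> at which \<open>\<rho>\<close> converges while \<open>\<sigma>\<close> does
  not (or \<open>D = |J(\<sigma>)|\<close> if there is none). Below \<open>D\<close> the two strings see the same
  computations, so the sequences \<open>t\<^sub>n\<close> agree up to \<open>t\<^sub>D\<close>; hence \<open>J(\<rho>)\<close> and \<open>J(\<sigma>)\<close> share
  their first \<open>D\<close> entries, \<open>D < |J(\<rho>)|\<close>, and \<open>h(\<rho>)\<close>, \<open>h(\<sigma>)\<close> share the terms with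
  exponents \<open>J\<restriction>i\<close>, \<open>i < D\<close>. The next exponent of \<open>h(\<sigma>)\<close> is \<open>J(\<sigma>)\<restriction>D\<close>, while the
  next exponent of \<open>h(\<rho>)\<close> is a string \<open>J(\<rho>)\<restriction>j\<close> properly extending it; such an
  extension is \<open>KB\<close>-smaller, so \<open>h(\<rho>) < h(\<sigma>)\<close>.\<close>

lemma first_divergence:
  assumes "\<And>n. Q n \<Longrightarrow> P n"
  obtains D where "D \<le> (m::nat)" "\<And>n. n < D \<Longrightarrow> P n = Q n" "D = m \<or> P D \<and> \<not> Q D"
proof
  let ?D = "LEAST n. n = m \<or> P n \<and> \<not> Q n"
  show "?D \<le> m" by (rule Least_le) simp
  show "?D = m \<or> P ?D \<and> \<not> Q ?D" by (rule LeastI[of _ m]) simp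
  show "P n = Q n" if "n < ?D" for n
    using not_less_Least[OF that] assms by blast
qed

lemma tprev_ge: "tprev conv s n \<ge> n + 1"
  by (induction n) auto

lemma strict_mono_tprev: "strict_mono (tprev conv s)"
  unfolding strict_mono_Suc_iff by (auto simp: less_max_iff_disj)

lemma tprev_Suc_le_length:
  assumes "tprev conv s n < length s"
  shows "tprev conv s (Suc n) \<le> length s"
proof (cases "\<exists>t. conv n (take t s)")
  case True
  then obtain t where "conv n (take t s)" by blast
  then have "conv n (take (min t (length s)) s)" by (cases "t \<le> length s") (auto simp: min_def)
  then have "(LEAST t. conv n (take t s)) \<le> length s"
    using Least_le[of "\<lambda>t. conv n (take t s)"] by (meson min.cobounded2 order_trans)
  with assms True show ?thesis by simp
qed (use assms in simp)

lemma less_Jlen_iff: "k < Jlen conv s \<longleftrightarrow> tseq conv s k \<le> length s"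
proof -
  have "tseq conv s (length s) > length s"
    using tprev_ge[of "Suc (length s)" conv s] by (simp add: tseq_def del: tprev.simps)
  then have Jlen: "tseq conv s (Jlen conv s) > length s"
    unfolding Jlen_def by (rule LeastI)
  have "tseq conv s k \<le> length s" if "k < Jlen conv s"
    using not_less_Least[OF that[unfolded Jlen_def]] by simp
  moreover have "k < Jlen conv s" if "tseq conv s k \<le> length s"
  proof (rule ccontr)
    assume "\<not> k < Jlen conv s"
    then have "tseq conv s (Jlen conv s) \<le> tseq conv s k"
      using strict_mono_less_eq[OF strict_mono_tprev] by (simp add: tseq_def del: tprev.simps)
    with Jlen that show False by simp
  qed
  ultimately show ?thesis by blast
qed

lemma tprev_le_length:
  assumes "s \<noteq> []" "D \<le> Jlen conv s"
  shows "tprev conv s D \<le> length s"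
proof (cases D)
  case 0
  with assms(1) show ?thesis by (cases s) auto
next
  case (Suc k)
  with assms(2) have "k < Jlen conv s" by simp
  with Suc show ?thesis by (simp add: less_Jlen_iff tseq_def del: tprev.simps)
qed

definition prefix_exponents :: "(nat \<Rightarrow> bool) \<Rightarrow> 'a list \<Rightarrow> nat \<Rightarrow> 'a list list" where
  "prefix_exponents P X a = map (\<lambda>i. take i X) (filter P [a..<length X]) @ [X, X]"

lemma h_eq_prefix_exponents:
  "s \<noteq> [] \<Longrightarrow> h code conv s = prefix_exponents (\<lambda>i. \<not> conv i s) (J code conv s) 0"
  by (simp add: h_def prefix_exponents_def)

lemma prefix_exponents_split:
  assumes "a \<le> b" "b \<le> length X"
  shows "prefix_exponents P X a = map (\<lambda>i. take i X) (filter P [a..<b]) @ prefix_exponents P X b"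
proof -
  have "[a..<length X] = [a..<b] @ [b..<length X]"
    using upt_add_eq_append[OF assms(1), of "length X - b"] assms(2) by simp
  then show ?thesis by (simp add: prefix_exponents_def)
qed

lemma prefix_exponents_Cons:
  assumes "a \<le> length X"
  obtains j r where "a \<le> j" "j \<le> length X" "prefix_exponents P X a = take j X # r"
proof (cases "filter P [a..<length X]")
  case Nil
  then show ?thesis using that[of "length X"] assms by (simp add: prefix_exponents_def)
next
  case (Cons i rest)
  then have "i \<in> set (filter P [a..<length X])" by simp
  then have "a \<le> i" "i \<le> length X" by auto
  then show ?thesis
    using Cons by (intro that[of i "map (\<lambda>i. take i X) rest @ [X, X]"]) (auto simp: prefix_exponents_def)
qed

lemma omega_less_append_Cons:
  assumes "y \<noteq> z" "le y z"
  shows "omega_less le (L @ y # ys) (L @ z # zs)"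
  unfolding omega_less_def omega_le_def
  using assms by (intro conjI disjI2 exI[of _ "length L"]) (auto simp: nth_append)

lemma omega_less_prefix_exponents_Suc:
  assumes "m < length X"
  shows "omega_less kb_le (L @ prefix_exponents P X (Suc m)) (L @ take m X # zs)"
proof -
  obtain j r where j: "Suc m \<le> j" "j \<le> length X"
    and eq: "prefix_exponents P X (Suc m) = take j X # r"
    using prefix_exponents_Cons assms by (metis Suc_leI)
  have "prefix (take m X) (take j X)"
    using j by (metis Suc_leD min.absorb1 take_is_prefix take_take)
  then have "kb_le (take j X) (take m X)" by (simp add: kb_le_def)
  moreover have "take j X \<noteq> take m X"
    using j assms by (metis length_take min.absorb2 not_less_eq_eq order.refl less_imp_le)
  ultimately show ?thesis
    unfolding eq by (intro omega_less_append_Cons)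
qed

lemma omega_less_prefix_exponents:
  assumes "m < length X"
  shows "omega_less kb_le (L @ prefix_exponents P X m) (L @ take m X # take m X # zs)"
proof (cases "P m")
  case True
  then have "prefix_exponents P X m = take m X # prefix_exponents P X (Suc m)"
    using prefix_exponents_split[of m "Suc m" X P] assms by simp
  then show ?thesis
    using omega_less_prefix_exponents_Suc[OF assms, of "L @ [take m X]"] by simp
next
  case False
  then have "prefix_exponents P X m = prefix_exponents P X (Suc m)"
    using prefix_exponents_split[of m "Suc m" X P] assms by simp
  then show ?thesis
    using omega_less_prefix_exponents_Suc[OF assms] by simp
qed

lemma h_less_h_Nil:
  assumes "\<rho> \<noteq> []"
  shows "omega_less kb_le (h code conv \<rho>) (h code conv [])"
proof (cases "J code conv \<rho> = []")
  case True
  then show ?thesis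
    using assms by (simp add: h_def omega_less_def omega_le_def)
next
  case False
  then show ?thesis
    using omega_less_prefix_exponents[of 0 "J code conv \<rho>" "[]" _ "[[]]"] assms
    by (simp add: h_eq_prefix_exponents h_def[of _ _ "[]"])
qed

context
  fixes conv :: "nat \<Rightarrow> nat list \<Rightarrow> bool"
  assumes mono: "\<And>i a b. prefix a b \<Longrightarrow> conv i a \<Longrightarrow> conv i b"
begin

lemma tprev_Suc_conv:
  "tprev conv s (Suc n) =
    (if conv n s then max (tprev conv s n + 1) (LEAST t. conv n (take t s)) else tprev conv s n + 1)"
proof -
  have "(\<exists>t. conv n (take t s)) \<longleftrightarrow> conv n s"
    using mono[OF take_is_prefix] by (metis take_all_iff order_refl)
  then show ?thesis by simp
qed

lemma Least_conv_take_prefix: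
  assumes "prefix s r" "conv n s"
  shows "(LEAST t. conv n (take t r)) = (LEAST t. conv n (take t s))"
proof -
  have take_eq: "take t r = take t s" if "t \<le> length s" for t
    using assms(1) that by (auto simp: prefix_def)
  let ?L = "LEAST t. conv n (take t s)"
  have "conv n (take (length s) s)" using assms(2) by simp
  then have L: "conv n (take ?L s)" "?L \<le> length s"
    by (rule LeastI, rule Least_le)
  show ?thesis
  proof (rule Least_equality)
    show "conv n (take ?L r)" using L take_eq by simp
    show "?L \<le> t" if "conv n (take t r)" for t
      using that take_eq[of t] L(2) by (cases "t \<le> length s") (auto intro: Least_le)
  qed
qed

lemma tprev_eq_of_agree:
  assumes pre: "prefix s r" and agree: "\<And>n. n < D \<Longrightarrow> conv n r = conv n s"
  shows "n \<le> D \<Longrightarrow> tprev conv r n = tprev conv s n"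
proof (induction n)
  case (Suc n)
  then have "tprev conv r n = tprev conv s n" "conv n r = conv n s" using agree by auto
  then show ?case
    using Least_conv_take_prefix[OF pre]
    by (simp only: tprev_Suc_conv) simp
qed simp

lemma Jlen_gt_of_agree:
  assumes "strict_prefix s r" "s \<noteq> []" "D \<le> Jlen conv s"
    and agree: "\<And>n. n < D \<Longrightarrow> conv n r = conv n s"
  shows "D < Jlen conv r"
proof -
  have "prefix s r" "length s < length r"
    using assms(1) by (auto simp: strict_prefix_def prefix_def)
  then have "tprev conv r D < length r"
    using tprev_eq_of_agree[OF _ agree] tprev_le_length[OF assms(2,3)] by simp
  then show ?thesis
    by (simp add: less_Jlen_iff tseq_def tprev_Suc_le_length del: tprev.simps)
qed

lemma take_J_eq_of_agree:
  assumes pre: "prefix s r" and "D \<le> Jlen conv s" "D \<le> Jlen conv r"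
    and agree: "\<And>n. n < D \<Longrightarrow> conv n r = conv n s"
  shows "take D (J code conv r) = take D (J code conv s)"
proof -
  have "take (tseq conv r i) r = take (tseq conv s i) s" if "i < D" for i
  proof -
    have "tseq conv r i = tseq conv s i"
      using tprev_eq_of_agree[OF pre agree, of "Suc i"] that by (simp add: tseq_def del: tprev.simps)
    moreover have "tseq conv s i \<le> length s"
      using that assms(2) less_Jlen_iff by fastforce
    ultimately show ?thesis using pre by (auto simp: prefix_def)
  qed
  with assms(2,3) show ?thesis by (simp add: J_def take_map)
qed

lemma h_eq_common_terms:
  assumes strict: "strict_prefix \<sigma> \<rho>" and "\<sigma> \<noteq> []" and Ds: "D \<le> Jlen conv \<sigma>"
    and agree: "\<And>n. n < D \<Longrightarrow> conv n \<rho> = conv n \<sigma>"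
  obtains L where "h code conv \<rho> = L @ prefix_exponents (\<lambda>i. \<not> conv i \<rho>) (J code conv \<rho>) D"
    and "h code conv \<sigma> = L @ prefix_exponents (\<lambda>i. \<not> conv i \<sigma>) (J code conv \<sigma>) D"
proof -
  have pre: "prefix \<sigma> \<rho>" and "\<rho> \<noteq> []" using strict by (auto simp: strict_prefix_def)
  define Js Jr where "Js = J code conv \<sigma>" and "Jr = J code conv \<rho>"
  have Dr: "D \<le> Jlen conv \<rho>" using Jlen_gt_of_agree[OF strict \<open>\<sigma> \<noteq> []\<close> Ds agree] by simp
  have "take i Jr = take i Js" if "i \<le> D" for i
    using that arg_cong[OF take_J_eq_of_agree[OF pre Ds Dr agree], of "take i"]
    by (simp add: min_def Js_def Jr_def)
  moreover have "filter (\<lambda>i. \<not> conv i \<rho>) [0..<D] = filter (\<lambda>i. \<not> conv i \<sigma>) [0..<D]"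
    using agree by (intro filter_cong) auto
  ultimately have "map (\<lambda>i. take i Jr) (filter (\<lambda>i. \<not> conv i \<rho>) [0..<D])
      = map (\<lambda>i. take i Js) (filter (\<lambda>i. \<not> conv i \<sigma>) [0..<D])"
    by (intro map_cong) auto
  moreover have "length Js = Jlen conv \<sigma>" "length Jr = Jlen conv \<rho>"
    by (simp_all add: Js_def Jr_def J_def)
  ultimately show ?thesis
    using that prefix_exponents_split[of 0 D Jr] prefix_exponents_split[of 0 D Js] Ds Dr
      \<open>\<sigma> \<noteq> []\<close> \<open>\<rho> \<noteq> []\<close> by (simp add: h_eq_prefix_exponents Js_def Jr_def)
qed

lemma h_less_of_strict_prefix:
  assumes strict: "strict_prefix \<sigma> \<rho>" and "\<sigma> \<noteq> []"
  shows "omega_less kb_le (h code conv \<rho>) (h code conv \<sigma>)"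
proof -
  define Js Jr where "Js = J code conv \<sigma>" and "Jr = J code conv \<rho>"
  have "conv n \<sigma> \<Longrightarrow> conv n \<rho>" for n using mono strict by (auto simp: strict_prefix_def)
  then obtain D where Ds: "D \<le> length Js" and agree: "\<And>n. n < D \<Longrightarrow> conv n \<rho> = conv n \<sigma>"
    and diverge: "D = length Js \<or> conv D \<rho> \<and> \<not> conv D \<sigma>"
    using first_divergence[of "\<lambda>n. conv n \<sigma>" "\<lambda>n. conv n \<rho>" "length Js"] by blast
  have Ds': "D \<le> Jlen conv \<sigma>" using Ds by (simp add: Js_def J_def)
  have Dr: "D < length Jr"
    using Jlen_gt_of_agree[OF strict \<open>\<sigma> \<noteq> []\<close> Ds' agree] by (simp add: Jr_def J_def)
  have take_D: "take D Jr = take D Js"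
    using take_J_eq_of_agree[OF _ Ds' _ agree] strict Dr by (simp add: Js_def Jr_def J_def prefix_order.less_imp_le)
  obtain L where hr: "h code conv \<rho> = L @ prefix_exponents (\<lambda>i. \<not> conv i \<rho>) Jr D"
    and hs: "h code conv \<sigma> = L @ prefix_exponents (\<lambda>i. \<not> conv i \<sigma>) Js D"
    using h_eq_common_terms[OF strict \<open>\<sigma> \<noteq> []\<close> Ds' agree] unfolding Js_def Jr_def .
  show ?thesis
  proof (cases "D = length Js")
    case True
    then have "prefix_exponents (\<lambda>i. \<not> conv i \<sigma>) Js D = [take D Jr, take D Jr]"
      using take_D by (simp add: prefix_exponents_def)
    then show ?thesis
      unfolding hr hs using omega_less_prefix_exponents[OF Dr, of L _ "[]"] by (simp only:)
  next
    case False
    with Ds diverge have "conv D \<rho>" "\<not> conv D \<sigma>" "D < length Js" by auto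
    then have "prefix_exponents (\<lambda>i. \<not> conv i \<rho>) Jr D = prefix_exponents (\<lambda>i. \<not> conv i \<rho>) Jr (Suc D)"
      and "prefix_exponents (\<lambda>i. \<not> conv i \<sigma>) Js D = take D Jr # prefix_exponents (\<lambda>i. \<not> conv i \<sigma>) Js (Suc D)"
      using prefix_exponents_split[of D "Suc D" Jr "\<lambda>i. \<not> conv i \<rho>"]
        prefix_exponents_split[of D "Suc D" Js "\<lambda>i. \<not> conv i \<sigma>"] Dr take_D by simp_all
    then show ?thesis
      unfolding hr hs using omega_less_prefix_exponents_Suc[OF Dr, of L] by (simp only:)
  qed
qed

end

theorem lemma4p11:
  fixes T :: "nat list set"
    and code :: "nat list \<Rightarrow> nat"
    and conv :: "nat \<Rightarrow> nat list \<Rightarrow> bool"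
    and \<sigma> \<rho> :: "nat list"
  assumes "is_tree T"
    and "inj code"
    and "\<And>a b. strict_prefix a b \<Longrightarrow> code a < code b"
    and "\<And>i. \<not> conv i []"
    and "\<And>i a b. prefix a b \<Longrightarrow> conv i a \<Longrightarrow> conv i b"
    and "\<rho> \<in> T" and "\<sigma> \<in> T" and "strict_prefix \<sigma> \<rho>"
  shows "omega_less kb_le (h code conv \<rho>) (h code conv \<sigma>)"
proof (cases "\<sigma> = []")
  case True
  moreover have "\<rho> \<noteq> []" using assms(8) by auto
  ultimately show ?thesis by (simp add: h_less_h_Nil)
next
  case False
  show ?thesis by (rule h_less_of_strict_prefix) (fact assms(5), fact assms(8), fact False)
qed

end
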